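(* Let $A\in\mathfrak{B}_{n\times m}$. (a) If $X_1,X_2,\dots,X_s\in\mathcal{T}_n$ are such that $r(X_1X_2\cdots X_sA)<r(X_2X_3\cdots X_sA)<\cdots<r(X_sA)<r(A)$, then $c(X_1X_2\cdots X_sA)<c(A)$. (b) If $Y_1,Y_2,\dots,Y_t\in\mathcal{T}_m$ are such that $c(AY_1Y_2\cdots Y_t)<c(AY_2Y_3\cdots Y_t)<\cdots<c(AY_t)<c(A)$, then $r(AY_1Y_2\cdots Y_t)<r(A)$.
   Context: $\mathfrak{B}_{n\times m}$ denotes the set of all $n\times m$ matrices with entries in $\{0,1\}$. For $A=[a_{ij}]\in\mathfrak{B}_{n\times m}$, $r(A)=\langle x_1,\dots,x_n\rangle$ with $x_i=\sum_{j=1}^m a_{ij}2^{m-j}$ (row $i$ read as a binary number, first entry most significant), and $c(A)=\langle y_1,\dots,y_m\rangle$ with $y_j=\sum_{i=1}^n a_{ij}2^{n-i}$ (column $j$ read as a binary number, top entry most significant). Tuples are compared in the lexicographic order $<$. $\mathcal{T}_k$ denotes the set of $k\times k$ transposition matrices, i.e. permutation matrices which, multiplied from the left, interchange exactly two rows of a matrix, and multiplied from the right, interchange exactly two columns. *)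

theory Defs
  imports "Jordan_Normal_Form.Gauss_Jordan_Elimination"
begin

definition binary_mats :: "nat \<Rightarrow> nat \<Rightarrow> int mat set" where
  "binary_mats n m = {A. A \<in> carrier_mat n m \<and>
     (\<forall>i<n. \<forall>j<m. A $$ (i,j) \<in> {0,1})}"

definition row_code :: "int mat \<Rightarrow> int list" where
  "row_code A = map (\<lambda>i. \<Sum>j<dim_col A. A $$ (i,j) * 2 ^ (dim_col A - 1 - j)) [0..<dim_row A]"

definition col_code :: "int mat \<Rightarrow> int list" where
  "col_code A = map (\<lambda>j. \<Sum>i<dim_row A. A $$ (i,j) * 2 ^ (dim_row A - 1 - i)) [0..<dim_col A]"

definition lex_less :: "int list \<Rightarrow> int list \<Rightarrow> bool" where
  "lex_less xs ys \<longleftrightarrow> (xs, ys) \<in> lexord {(x, y). x < y}"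

definition transposition_mats :: "nat \<Rightarrow> int mat set" where
  "transposition_mats k = {swaprows_mat k a b | a b. a < k \<and> b < k \<and> a \<noteq> b}"

end

theory Submission
  imports Defs "Jordan_Normal_Form.Column_Operations" "HOL-Combinatorics.Permutations"
begin

text \<open>
  It suffices to treat a single transposition and chain the steps by transitivity of the
  lexicographic order. If swapping rows \<open>a < b\<close> of a binary matrix lowers its row code, then
  row \<open>b\<close> is smaller than row \<open>a\<close> as a binary number, so at the first column \<open>d\<close> where they
  differ row \<open>a\<close> has a 1 and row \<open>b\<close> a 0. The swap leaves the columns before \<open>d\<close> unchanged and
  moves the 1 of column \<open>d\<close> from position \<open>a\<close> down to position \<open>b\<close>, so the column code drops.
  Part (b) is the transposed statement, except that consecutive matrices \<open>A Y P\<close> and \<open>A P\<close>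
  (with \<open>P\<close> the product of the later transpositions) do not differ by a swap applied last; but
  \<open>A Y P = (A P) (P\<inverse> Y P)\<close>, and the conjugate of a transposition by the column permutation
  \<open>P\<close> is again a transposition.
\<close>

lemma lex_less_irrefl: "\<not> lex_less xs xs"
  unfolding lex_less_def by (rule lexord_irreflexive) simp

lemma lex_less_trans: "lex_less xs ys \<Longrightarrow> lex_less ys zs \<Longrightarrow> lex_less xs zs"
  unfolding lex_less_def by (erule lexord_trans) (auto simp: trans_def)

lemma lex_less_first_difference:
  assumes "k < length xs" "k < length ys" "\<And>j. j < k \<Longrightarrow> xs ! j = ys ! j" "xs ! k < ys ! k"
  shows "lex_less xs ys"
proof -
  have "take k xs = take k ys" by (rule nth_equalityI) (use assms in auto)
  then show ?thesis using assms unfolding lex_less_def lexord_take_index_conv by auto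
qed

lemma lex_less_swap_imp_less:
  assumes ab: "a < b" "b < length xs" and lt: "lex_less (xs[a := xs ! b, b := xs ! a]) xs"
  shows "xs ! b < xs ! a"
proof (rule ccontr)
  let ?ys = "xs[a := xs ! b, b := xs ! a]"
  assume "\<not> xs ! b < xs ! a"
  then consider "xs ! a = xs ! b" | "xs ! a < xs ! b" by fastforce
  then show False
  proof cases
    case 1
    then have "?ys = xs" by (metis list_update_id)
    then show False using lt lex_less_irrefl by metis
  next
    case 2
    have "lex_less xs ?ys"
      by (rule lex_less_first_difference[of a]) (use ab 2 in auto)
    then show False using lt lex_less_trans lex_less_irrefl by metis
  qed
qed

definition binary_value :: "nat \<Rightarrow> (nat \<Rightarrow> int) \<Rightarrow> int" where
  "binary_value k x = (\<Sum>j<k. x j * 2 ^ (k - 1 - j))"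

lemma binary_value_cong: "(\<And>j. j < k \<Longrightarrow> x j = y j) \<Longrightarrow> binary_value k x = binary_value k y"
  unfolding binary_value_def by (rule sum.cong) auto

lemma binary_value_Suc: "binary_value (Suc k) x = 2 * binary_value k x + x k"
proof -
  have "(\<Sum>j<k. x j * 2 ^ (Suc k - 1 - j)) = (\<Sum>j<k. 2 * (x j * 2 ^ (k - 1 - j)))"
  proof (rule sum.cong)
    fix j assume "j \<in> {..<k}"
    then have "Suc k - 1 - j = Suc (k - 1 - j)" by auto
    then show "x j * 2 ^ (Suc k - 1 - j) = 2 * (x j * 2 ^ (k - 1 - j))" by simp
  qed simp
  then show ?thesis unfolding binary_value_def by (simp add: sum_distrib_left)
qed

lemma binary_value_less_first_difference:
  assumes "\<And>j. j < k \<Longrightarrow> x j \<in> {0,1}" "\<And>j. j < k \<Longrightarrow> y j \<in> {0,1}"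
    and "d < k" "\<And>j. j < d \<Longrightarrow> x j = y j" "x d = 0" "y d = 1"
  shows "binary_value k x < binary_value k y"
  using assms
proof (induction k)
  case (Suc k)
  show ?case
  proof (cases "d = k")
    case True
    then have "binary_value k x = binary_value k y" using Suc.prems by (intro binary_value_cong) auto
    then show ?thesis using True Suc.prems by (simp add: binary_value_Suc)
  next
    case False
    then have "binary_value k x < binary_value k y" using Suc by auto
    moreover have "x k \<in> {0,1}" "y k \<in> {0,1}" using Suc.prems by auto
    ultimately show ?thesis by (auto simp: binary_value_Suc)
  qed
qed simp

lemma binary_value_lessE:
  assumes lt: "binary_value k x < binary_value k y"
    and bx: "\<And>j. j < k \<Longrightarrow> x j \<in> {0,1}" and "\<And>j. j < k \<Longrightarrow> y j \<in> {0,1}"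
  obtains d where "d < k" "\<And>j. j < d \<Longrightarrow> x j = y j" "x d = 0" "y d = 1"
proof -
  have "\<exists>j<k. x j \<noteq> y j" using lt binary_value_cong[of k x y] by fastforce
  define d where "d = (LEAST j. j < k \<and> x j \<noteq> y j)"
  have d: "d < k" "x d \<noteq> y d"
    using LeastI_ex[OF \<open>\<exists>j<k. x j \<noteq> y j\<close>] unfolding d_def by auto
  have before: "x j = y j" if "j < d" for j
    using not_less_Least[of j "\<lambda>j. j < k \<and> x j \<noteq> y j"] that d unfolding d_def by auto
  have "\<not> (x d = 1 \<and> y d = 0)"
    using binary_value_less_first_difference[of k y x d] assms d before lt by fastforce
  then have "x d = 0" "y d = 1" using bx[OF d(1)] assms(3)[OF d(1)] d(2) by auto
  then show thesis using that d before by blast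
qed

lemma length_row_code [simp]: "length (row_code A) = dim_row A"
  by (simp add: row_code_def)

lemma length_col_code [simp]: "length (col_code A) = dim_col A"
  by (simp add: col_code_def)

lemma nth_row_code:
  "i < dim_row A \<Longrightarrow> row_code A ! i = binary_value (dim_col A) (\<lambda>j. A $$ (i, j))"
  by (simp add: row_code_def binary_value_def)

lemma nth_col_code:
  "j < dim_col A \<Longrightarrow> col_code A ! j = binary_value (dim_row A) (\<lambda>i. A $$ (i, j))"
  by (simp add: col_code_def binary_value_def)

lemma col_code_eq_row_code_transpose: "col_code A = row_code A\<^sup>T"
  by (simp add: col_code_def row_code_def)

lemma binary_matsD:
  assumes "A \<in> binary_mats n m"
  shows "dim_row A = n" "dim_col A = m" "\<And>i j. i < n \<Longrightarrow> j < m \<Longrightarrow> A $$ (i, j) \<in> {0, 1}"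
  using assms by (auto simp: binary_mats_def)

lemma swaprows_commute: "swaprows a b A = swaprows b a A"
  by (rule eq_matI) auto

lemma row_code_swaprows:
  assumes "a < dim_row A" "b < dim_row A"
  shows "row_code (swaprows a b A) = (row_code A)[a := row_code A ! b, b := row_code A ! a]"
  by (rule nth_equalityI) (use assms in \<open>auto simp: nth_row_code nth_list_update intro!: binary_value_cong\<close>)

lemma col_code_swaprows_less_ordered:
  assumes A: "A \<in> binary_mats n m" and ab: "a < b" "b < n"
    and lt: "lex_less (row_code (swaprows a b A)) (row_code A)"
  shows "lex_less (col_code (swaprows a b A)) (col_code A)"
proof -
  let ?B = "swaprows a b A"
  have dims: "dim_row A = n" "dim_col A = m"
    and bin: "\<And>i j. i < n \<Longrightarrow> j < m \<Longrightarrow> A $$ (i, j) \<in> {0, 1}"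
    using binary_matsD[OF A] by auto
  have "row_code A ! b < row_code A ! a"
    using lex_less_swap_imp_less[OF ab(1)] lt row_code_swaprows[of a A b] ab dims by simp
  then have "binary_value m (\<lambda>j. A $$ (b, j)) < binary_value m (\<lambda>j. A $$ (a, j))"
    using ab dims by (simp add: nth_row_code)
  then obtain d where d: "d < m" "\<And>j. j < d \<Longrightarrow> A $$ (b, j) = A $$ (a, j)"
    and "A $$ (b, d) = 0" "A $$ (a, d) = 1"
    by (rule binary_value_lessE) (use bin ab in auto)
  have "col_code ?B ! j = col_code A ! j" if "j < d" for j
    using d that ab dims by (auto simp: nth_col_code intro!: binary_value_cong)
  moreover have "col_code ?B ! d < col_code A ! d"
  proof -
    have "binary_value n (\<lambda>i. ?B $$ (i, d)) < binary_value n (\<lambda>i. A $$ (i, d))"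
      by (rule binary_value_less_first_difference[of n _ _ a])
        (use bin ab d \<open>A $$ (b, d) = 0\<close> \<open>A $$ (a, d) = 1\<close> dims in auto)
    then show ?thesis using d dims by (simp add: nth_col_code)
  qed
  ultimately show ?thesis using lex_less_first_difference[of d] d dims by simp
qed

lemma col_code_swaprows_less:
  assumes A: "A \<in> binary_mats n m" and ab: "a < n" "b < n"
    and lt: "lex_less (row_code (swaprows a b A)) (row_code A)"
  shows "lex_less (col_code (swaprows a b A)) (col_code A)"
proof (cases a b rule: linorder_cases)
  case equal
  then have "swaprows a b A = A" by (intro eq_matI) auto
  then show ?thesis using lt lex_less_irrefl by simp
next
  case greater
  then show ?thesis using col_code_swaprows_less_ordered[OF A greater ab(1)] lt
    by (simp add: swaprows_commute[of a b])
qed (rule col_code_swaprows_less_ordered[OF A _ ab(2) lt])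

lemma transpose_swaprows:
  "a < dim_row A \<Longrightarrow> b < dim_row A \<Longrightarrow> (swaprows a b A)\<^sup>T = swapcols a b A\<^sup>T"
  by (rule eq_matI) auto

lemma transpose_binary_mats: "A \<in> binary_mats n m \<Longrightarrow> A\<^sup>T \<in> binary_mats m n"
  by (fastforce simp: binary_mats_def)

lemma row_code_swapcols_less:
  assumes A: "A \<in> binary_mats n m" and ab: "a < m" "b < m"
    and lt: "lex_less (col_code (swapcols a b A)) (col_code A)"
  shows "lex_less (row_code (swapcols a b A)) (row_code A)"
proof -
  have "swapcols a b A = (swaprows a b A\<^sup>T)\<^sup>T"
    using transpose_swaprows[of a "A\<^sup>T" b] ab binary_matsD(2)[OF A] by simp
  then show ?thesis
    using col_code_swaprows_less[OF transpose_binary_mats[OF A] ab] lt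
    by (simp add: col_code_eq_row_code_transpose)
qed

lemma swaprows_binary_mats:
  "A \<in> binary_mats n m \<Longrightarrow> a < n \<Longrightarrow> b < n \<Longrightarrow> swaprows a b A \<in> binary_mats n m"
  by (fastforce simp: binary_mats_def)

lemma transposition_matsE:
  assumes "X \<in> transposition_mats n"
  obtains a b where "X = swaprows_mat n a b" "a < n" "b < n"
  using assms by (auto simp: transposition_mats_def)

lemma transposition_mult_binary_mats:
  assumes "X \<in> transposition_mats n" "B \<in> binary_mats n m"
  obtains a b where "a < n" "b < n" "X * B = swaprows a b B" "X * B \<in> binary_mats n m"
proof -
  obtain a b where "X = swaprows_mat n a b" "a < n" "b < n"
    using assms(1) by (rule transposition_matsE)
  moreover have "B \<in> carrier_mat n m" using assms(2) by (simp add: binary_mats_def)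
  ultimately show thesis using that swaprows_mat swaprows_binary_mats[OF assms(2)] by metis
qed

lemma foldr_transpositions_binary_mats:
  "set Xs \<subseteq> transposition_mats n \<Longrightarrow> A \<in> binary_mats n m \<Longrightarrow> foldr (*) Xs A \<in> binary_mats n m"
  by (induction Xs) (auto elim: transposition_mult_binary_mats)

lemma col_code_transposition_mult_less:
  assumes "B \<in> binary_mats n m" "X \<in> transposition_mats n"
    and "lex_less (row_code (X * B)) (row_code B)"
  shows "lex_less (col_code (X * B)) (col_code B)"
  using assms(2,1) by (rule transposition_mult_binary_mats) (use assms col_code_swaprows_less in metis)

definition permute_cols :: "(nat \<Rightarrow> nat) \<Rightarrow> 'a mat \<Rightarrow> 'a mat" where
  "permute_cols p A = mat (dim_row A) (dim_col A) (\<lambda>(i, j). A $$ (i, p j))"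

lemma index_permute_cols [simp]:
  "i < dim_row A \<Longrightarrow> j < dim_col A \<Longrightarrow> permute_cols p A $$ (i, j) = A $$ (i, p j)"
  "dim_row (permute_cols p A) = dim_row A" "dim_col (permute_cols p A) = dim_col A"
  by (simp_all add: permute_cols_def)

lemma swapcols_eq_permute_cols: "swapcols a b A = permute_cols (Transposition.transpose a b) A"
  by (rule eq_matI) (auto simp: transpose_def)

lemma permutes_lessThan_less: "p permutes {..<k} \<Longrightarrow> j < k \<Longrightarrow> p j < k"
  using permutes_in_image[of p "{..<k}" j] by simp

lemma permute_cols_permute_cols:
  "p permutes {..<dim_col A} \<Longrightarrow> permute_cols p (permute_cols q A) = permute_cols (q \<circ> p) A"
  by (rule eq_matI) (auto simp: permutes_lessThan_less)

lemma permute_cols_swapcols: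
  assumes p: "p permutes {..<dim_col A}" and "a < dim_col A" "b < dim_col A"
  shows "permute_cols p (swapcols a b A) = swapcols (inv_into UNIV p a) (inv_into UNIV p b) (permute_cols p A)"
proof -
  let ?t = "Transposition.transpose (inv_into UNIV p a) (inv_into UNIV p b)"
  have t: "?t permutes {..<dim_col A}"
    using assms permutes_lessThan_less[OF permutes_inv[OF p]] by (simp add: permutes_swap_id)
  have "permute_cols p (swapcols a b A) = permute_cols (Transposition.transpose a b \<circ> p) A"
    using p by (simp add: swapcols_eq_permute_cols permute_cols_permute_cols)
  also have "Transposition.transpose a b \<circ> p = p \<circ> ?t"
    by (rule transpose_comp_eq[OF permutes_bij[OF p]])
  also have "permute_cols (p \<circ> ?t) A = permute_cols ?t (permute_cols p A)"
    using t by (simp add: permute_cols_permute_cols)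
  finally show ?thesis by (simp only: swapcols_eq_permute_cols)
qed

lemma permute_cols_binary_mats:
  assumes p: "p permutes {..<m}" and A: "A \<in> binary_mats n m"
  shows "permute_cols p A \<in> binary_mats n m"
  unfolding binary_mats_def
proof (intro CollectI conjI allI impI)
  show "permute_cols p A \<in> carrier_mat n m"
    by (rule carrier_matI) (simp_all add: binary_matsD(1,2)[OF A])
  fix i j assume ij: "i < n" "j < m"
  have "A $$ (i, p j) \<in> {0, 1}" using binary_matsD(3)[OF A ij(1) permutes_lessThan_less[OF p ij(2)]] .
  then show "permute_cols p A $$ (i, j) \<in> {0, 1}" using ij binary_matsD(1,2)[OF A] by simp
qed

lemma foldl_transpositions_eq_permute_cols:
  fixes n :: nat
  assumes "set Zs \<subseteq> transposition_mats m"
  obtains p where "p permutes {..<m}" "\<And>C. C \<in> carrier_mat n m \<Longrightarrow> foldl (*) C Zs = permute_cols p C"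
proof -
  have "\<exists>p. p permutes {..<m} \<and> (\<forall>C \<in> carrier_mat n m. foldl (*) C Zs = permute_cols p C)"
    using assms
  proof (induction Zs)
    case Nil
    have "C = permute_cols id C" for C :: "'a mat" by (rule eq_matI) auto
    then show ?case using permutes_id by (metis foldl_Nil)
  next
    case (Cons Z Zs)
    then obtain p where p: "p permutes {..<m}"
      and IH: "\<And>C. C \<in> carrier_mat n m \<Longrightarrow> foldl (*) C Zs = permute_cols p C" by auto
    obtain a b where Z: "Z = swaprows_mat m a b" "a < m" "b < m"
      using Cons.prems by (auto elim: transposition_matsE)
    have "foldl (*) C (Z # Zs) = permute_cols (Transposition.transpose a b \<circ> p) C"
      if C: "C \<in> carrier_mat n m" for C
    proof -
      have "foldl (*) C (Z # Zs) = foldl (*) (swapcols a b C) Zs"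
        using swapcols_mat[OF C Z(2,3)] Z(1) by simp
      also have "\<dots> = permute_cols p (swapcols a b C)" using IH C by simp
      also have "\<dots> = permute_cols (Transposition.transpose a b \<circ> p) C"
        using p C unfolding swapcols_eq_permute_cols by (simp add: permute_cols_permute_cols)
      finally show ?thesis .
    qed
    moreover have "Transposition.transpose a b \<circ> p permutes {..<m}"
      using p Z by (simp add: permutes_compose permutes_swap_id)
    ultimately show ?case by blast
  qed
  then show thesis using that by blast
qed

lemma row_code_foldl_mult_transposition_less:
  assumes A: "A \<in> binary_mats n m" and Y: "Y \<in> transposition_mats m"
    and Zs: "set Zs \<subseteq> transposition_mats m"
    and lt: "lex_less (col_code (foldl (*) (A * Y) Zs)) (col_code (foldl (*) A Zs))"
  shows "lex_less (row_code (foldl (*) (A * Y) Zs)) (row_code (foldl (*) A Zs))"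
proof -
  have Ac: "A \<in> carrier_mat n m" using A by (simp add: binary_mats_def)
  obtain p where p: "p permutes {..<m}"
    and P: "\<And>C. C \<in> carrier_mat n m \<Longrightarrow> foldl (*) C Zs = permute_cols p C"
    using foldl_transpositions_eq_permute_cols[OF Zs, where n = n] by blast
  obtain a b where ab: "Y = swaprows_mat m a b" "a < m" "b < m"
    using Y by (rule transposition_matsE)
  have AY: "A * Y = swapcols a b A" using swapcols_mat[OF Ac ab(2,3)] ab(1) by simp
  have "foldl (*) (A * Y) Zs = permute_cols p (swapcols a b A)"
    using P[of "A * Y"] AY Ac by simp
  also have "\<dots> = swapcols (inv_into UNIV p a) (inv_into UNIV p b) (permute_cols p A)"
    using permute_cols_swapcols[of p A a b] p ab carrier_matD[OF Ac] by simp
  also have "permute_cols p A = foldl (*) A Zs" using P[OF Ac] by simp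
  finally have "foldl (*) (A * Y) Zs = swapcols (inv_into UNIV p a) (inv_into UNIV p b) (foldl (*) A Zs)" .
  moreover have "inv_into UNIV p a < m" "inv_into UNIV p b < m"
    using ab permutes_lessThan_less[OF permutes_inv[OF p]] by simp_all
  moreover have "foldl (*) A Zs \<in> binary_mats n m"
    using P[OF Ac] permute_cols_binary_mats[OF p A] by simp
  ultimately show ?thesis using lt row_code_swapcols_less by simp
qed

lemma lex_less_chain_drop:
  assumes "xs \<noteq> []" "\<And>i. i < length xs \<Longrightarrow> lex_less (f (drop i xs)) (f (drop (Suc i) xs))"
  shows "lex_less (f xs) (f [])"
  using assms
proof (induction xs)
  case (Cons x xs)
  have "lex_less (f (x # xs)) (f xs)" using Cons.prems(2)[of 0] by simp
  moreover have "lex_less (f xs) (f [])" if "xs \<noteq> []"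
    using Cons.IH[OF that] Cons.prems(2)[of "Suc i" for i] by simp
  ultimately show ?case by (cases "xs = []") (auto intro: lex_less_trans)
qed simp

lemma col_code_foldr_transpositions_less:
  assumes A: "A \<in> binary_mats n m" and Xs: "Xs \<noteq> []" "set Xs \<subseteq> transposition_mats n"
    and rows: "\<And>i. i < length Xs \<Longrightarrow>
      lex_less (row_code (foldr (*) (drop i Xs) A)) (row_code (foldr (*) (drop (Suc i) Xs) A))"
  shows "lex_less (col_code (foldr (*) Xs A)) (col_code A)"
proof -
  have "lex_less (col_code (foldr (*) (drop i Xs) A)) (col_code (foldr (*) (drop (Suc i) Xs) A))"
    if i: "i < length Xs" for i
  proof -
    let ?B = "foldr (*) (drop (Suc i) Xs) A"
    have "?B \<in> binary_mats n m"
      using foldr_transpositions_binary_mats[OF order_trans[OF set_drop_subset Xs(2)] A] .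
    moreover have "Xs ! i \<in> transposition_mats n" using Xs(2) nth_mem[OF i] by blast
    moreover have "drop i Xs = Xs ! i # drop (Suc i) Xs" by (rule Cons_nth_drop_Suc[OF i, symmetric])
    ultimately show ?thesis using col_code_transposition_mult_less rows[OF i] by simp
  qed
  then show ?thesis using lex_less_chain_drop[OF Xs(1), of "\<lambda>Zs. col_code (foldr (*) Zs A)"] by simp
qed

lemma row_code_foldl_transpositions_less:
  assumes A: "A \<in> binary_mats n m" and Ys: "Ys \<noteq> []" "set Ys \<subseteq> transposition_mats m"
    and cols: "\<And>i. i < length Ys \<Longrightarrow>
      lex_less (col_code (foldl (*) A (drop i Ys))) (col_code (foldl (*) A (drop (Suc i) Ys)))"
  shows "lex_less (row_code (foldl (*) A Ys)) (row_code A)"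
proof -
  have "lex_less (row_code (foldl (*) A (drop i Ys))) (row_code (foldl (*) A (drop (Suc i) Ys)))"
    if i: "i < length Ys" for i
  proof -
    have "set (drop (Suc i) Ys) \<subseteq> transposition_mats m" by (rule order_trans[OF set_drop_subset Ys(2)])
    moreover have "Ys ! i \<in> transposition_mats m" using Ys(2) nth_mem[OF i] by blast
    moreover have "drop i Ys = Ys ! i # drop (Suc i) Ys" by (rule Cons_nth_drop_Suc[OF i, symmetric])
    ultimately show ?thesis using row_code_foldl_mult_transposition_less[OF A] cols[OF i] by simp
  qed
  then show ?thesis using lex_less_chain_drop[OF Ys(1), of "\<lambda>Zs. row_code (foldl (*) A Zs)"] by simp
qed

theorem theorem1:
  fixes A :: "int mat" and n m :: nat
  assumes "A \<in> binary_mats n m"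
  shows "(\<forall>Xs. Xs \<noteq> [] \<and> set Xs \<subseteq> transposition_mats n \<and>
            (\<forall>i<length Xs. lex_less (row_code (foldr (*) (drop i Xs) A))
                                     (row_code (foldr (*) (drop (Suc i) Xs) A)))
            \<longrightarrow> lex_less (col_code (foldr (*) Xs A)) (col_code A))
       \<and> (\<forall>Ys. Ys \<noteq> [] \<and> set Ys \<subseteq> transposition_mats m \<and>
            (\<forall>i<length Ys. lex_less (col_code (foldl (*) A (drop i Ys)))
                                     (col_code (foldl (*) A (drop (Suc i) Ys))))
            \<longrightarrow> lex_less (row_code (foldl (*) A Ys)) (row_code A))"
  using col_code_foldr_transpositions_less[OF assms] row_code_foldl_transpositions_less[OF assms]
  by blast

end
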